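(* For every fixed positive integer $p$, $$\lim_{d\to\infty}\frac{|B(d,p)\cap\mathbb{P}^d_\circ|}{d^p}=\frac{2^{p-1}}{p!}\quad\text{and}\quad\lim_{d\to\infty}\frac{\kappa(B(d,p)\cap\mathbb{P}^d_\circ)}{d^{p-1}}=\frac{2^{p-1}}{(p-1)!}.$$
   Context: A point of $\mathbb{Z}^d$ is primitive if its coordinates are relatively prime; $\mathbb{P}^d_\circ$ denotes the set of primitive points of $\mathbb{Z}^d$ whose first non-zero coordinate is positive. $B(d,p)=\{x\in\mathbb{R}^d:\|x\|_1\le p\}$. For a finite $\mathcal{X}\subset\mathbb{R}^d$, $\kappa(\mathcal{X})=\max_{1\le i\le d}\sum_{x\in\mathcal{X}}|x_i|$. *)

theory Defs
  imports Complex_Main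
begin

text \<open>Points of Z^d are represented as integer lists of length d.\<close>

definition primitive :: "int list \<Rightarrow> bool" where
  "primitive x \<longleftrightarrow> Gcd (set x) = 1"

definition prim_pts :: "nat \<Rightarrow> int list set" where
  "prim_pts d = {x. length x = d \<and> primitive x \<and> hd (dropWhile (\<lambda>a. a = 0) x) > 0}"

definition l1ball :: "nat \<Rightarrow> nat \<Rightarrow> int list set" where
  "l1ball d p = {x. length x = d \<and> sum_list (map abs x) \<le> int p}"

definition kappa :: "nat \<Rightarrow> int list set \<Rightarrow> int" where
  "kappa d X = Max ((\<lambda>i. \<Sum>x\<in>X. \<bar>x ! i\<bar>) ` {..<d})"

end

theory Submission
  imports Defs "HOL-Analysis.Gamma_Function" "HOL-Combinatorics.Permutations"
begin

(* A point of B(d,p) has at most p non-zero coordinates, and if it has exactly p they are all +-1.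
   So the primitive points with positive leading coordinate are the 2^(p-1) (d choose p) sign
   vectors of weight p with leading entry +1, plus points with fewer than p non-zero coordinates,
   of which there are O(d^(p-1)).
   For kappa: the primitive points of B(d,p) form a set invariant under permutations of the
   coordinates and under x |-> -x.  Hence all d column sums of |x_i| agree, and halving by the sign
   symmetry gives d * kappa = sum of ||x||_1 over the point set, which lies between
   p 2^(p-1) (d choose p) and p times the number of points. *)

section \<open>Lists with a prescribed number of non-zero entries\<close>

definition nnz :: "'a::zero list \<Rightarrow> nat" where
  "nnz x = length (filter (\<lambda>a. a \<noteq> 0) x)"

definition sparse_lists :: "'a::zero set \<Rightarrow> nat \<Rightarrow> nat \<Rightarrow> 'a list set" where
  "sparse_lists A d q = {x. length x = d \<and> set x \<subseteq> A \<and> nnz x = q}"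

lemma nnz_Nil [simp]: "nnz [] = 0"
  by (simp add: nnz_def)

lemma nnz_Cons [simp]: "nnz (a # x) = (if a = 0 then nnz x else Suc (nnz x))"
  by (simp add: nnz_def)

lemma nnz_map_uminus [simp]: "nnz (map uminus x) = nnz (x :: 'a::ab_group_add list)"
  by (induction x) auto

lemma nnz_eq_0_iff: "nnz x = 0 \<longleftrightarrow> set x \<subseteq> {0}"
  by (induction x) auto

lemma finite_sparse_lists: "finite A \<Longrightarrow> finite (sparse_lists A d q)"
  by (rule finite_subset[OF _ finite_lists_length_eq[of A d]]) (auto simp: sparse_lists_def)

lemma map_uminus_in_sparse_lists:
  fixes A :: "'a::ab_group_add set"
  shows "(\<And>a. a \<in> A \<Longrightarrow> - a \<in> A) \<Longrightarrow> x \<in> sparse_lists A d q \<Longrightarrow> map uminus x \<in> sparse_lists A d q"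
  by (auto simp: sparse_lists_def)

lemma sparse_lists_0: "0 \<in> A \<Longrightarrow> sparse_lists A d 0 = {replicate d 0}"
  by (auto simp: sparse_lists_def nnz_eq_0_iff intro: replicate_length_same[symmetric])

lemma sparse_lists_Suc_Suc:
  assumes "0 \<in> A"
  shows "sparse_lists A (Suc d) (Suc q) =
    Cons 0 ` sparse_lists A d (Suc q) \<union> (\<lambda>(a, y). a # y) ` ((A - {0}) \<times> sparse_lists A d q)"
proof -
  have "x \<in> Cons 0 ` sparse_lists A d (Suc q) \<union> (\<lambda>(a, y). a # y) ` ((A - {0}) \<times> sparse_lists A d q)"
    if "x \<in> sparse_lists A (Suc d) (Suc q)" for x
    using that by (cases x) (auto simp: sparse_lists_def split: if_splits)
  then show ?thesis
    using assms by (auto simp: sparse_lists_def)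
qed

lemma card_sparse_lists:
  assumes "finite A" "0 \<in> A"
  shows "card (sparse_lists A d q) = (d choose q) * (card A - 1) ^ q"
proof (induction d arbitrary: q)
  case 0
  have "sparse_lists A 0 q = (if q = 0 then {[]} else {})"
    by (auto simp: sparse_lists_def)
  then show ?case by simp
next
  case (Suc d)
  define c where "c = card A - 1"
  have card_nonzero: "card (A - {0}) = c"
    using assms by (simp add: c_def)
  show ?case
  proof (cases q)
    case 0
    then show ?thesis using assms by (simp add: sparse_lists_0)
  next
    case (Suc q')
    let ?Z = "Cons 0 ` sparse_lists A d (Suc q')"
    let ?N = "(\<lambda>(a, y). a # y) ` ((A - {0}) \<times> sparse_lists A d q')"
    have "card (sparse_lists A (Suc d) q) = card ?Z + card ?N"
      unfolding Suc sparse_lists_Suc_Suc[OF assms(2)]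
      by (rule card_Un_disjoint) (use assms in \<open>auto intro: finite_sparse_lists\<close>)
    also have "card ?Z = (d choose Suc q') * c ^ Suc q'"
      by (simp add: card_image Suc.IH c_def)
    also have "card ?N = c * ((d choose q') * c ^ q')"
      by (subst card_image) (auto simp: inj_on_def card_cartesian_product card_nonzero Suc.IH c_def)
    also have "(d choose Suc q') * c ^ Suc q' + c * ((d choose q') * c ^ q') = (Suc d choose q) * c ^ q"
      by (simp add: Suc algebra_simps)
    finally show ?thesis
      by (simp add: c_def)
  qed
qed

section \<open>Sign and coordinate symmetry\<close>

abbreviation l1_norm :: "'a::ordered_ab_group_add_abs list \<Rightarrow> 'a" where
  "l1_norm x \<equiv> sum_list (map abs x)"

(* hd [] is unspecified, so lead_pos says nothing about the zero list; the lemmas below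
   always assume a non-zero entry. *)
definition lead_pos :: "'a::linordered_ab_group_add list \<Rightarrow> bool" where
  "lead_pos x \<longleftrightarrow> hd (dropWhile (\<lambda>a. a = 0) x) > 0"

lemma lead_pos_uminus:
  "\<exists>a\<in>set x. a \<noteq> 0 \<Longrightarrow> lead_pos (map uminus x) \<longleftrightarrow> \<not> lead_pos x"
  by (induction x) (auto simp: lead_pos_def)

lemma sum_eq_twice_sum_lead_pos:
  fixes Q :: "'a::linordered_ab_group_add list set" and g :: "'a list \<Rightarrow> 'b::comm_semiring_1"
  assumes "finite Q"
    and uminus_closed: "\<And>x. x \<in> Q \<Longrightarrow> map uminus x \<in> Q"
    and nonzero: "\<And>x. x \<in> Q \<Longrightarrow> \<exists>a\<in>set x. a \<noteq> 0"
    and g_uminus: "\<And>x. x \<in> Q \<Longrightarrow> g (map uminus x) = g x"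
  shows "sum g Q = 2 * sum g {x\<in>Q. lead_pos x}"
proof -
  have "sum g Q = sum g ({x\<in>Q. lead_pos x} \<union> {x\<in>Q. \<not> lead_pos x})"
    by (rule sum.cong) auto
  also have "\<dots> = sum g {x\<in>Q. lead_pos x} + sum g {x\<in>Q. \<not> lead_pos x}"
    by (rule sum.union_disjoint) (use \<open>finite Q\<close> in auto)
  also have "sum g {x\<in>Q. \<not> lead_pos x} = sum g {x\<in>Q. lead_pos x}"
    by (rule sum.reindex_bij_witness[of _ "map uminus" "map uminus"])
      (auto simp: comp_def uminus_closed g_uminus nonzero lead_pos_uminus)
  finally show ?thesis
    by (simp add: mult_2)
qed

lemma sum_nth_transpose_eq:
  assumes "\<And>x. x \<in> S \<Longrightarrow> length x = d"
    and "\<And>x. x \<in> S \<Longrightarrow> permute_list (Transposition.transpose i j) x \<in> S"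
    and "i < d" "j < d"
  shows "(\<Sum>x\<in>S. f (x ! i)) = (\<Sum>x\<in>S. f (x ! j))"
proof -
  let ?\<tau> = "permute_list (Transposition.transpose i j)"
  have perm: "Transposition.transpose i j permutes {..<length x}" if "x \<in> S" for x
    using that assms by (intro permutes_swap_id) auto
  have involution: "?\<tau> (?\<tau> x) = x" if "x \<in> S" for x
    using permute_list_compose[OF perm[OF that], of "Transposition.transpose i j"] by simp
  show ?thesis
    by (rule sum.reindex_bij_witness[of _ ?\<tau> ?\<tau>])
      (use assms perm involution in \<open>auto simp: permute_list_nth\<close>)
qed

lemma sum_sum_list_eq_of_nat_mult_sum_nth:
  fixes f :: "'a \<Rightarrow> 'b::comm_semiring_1"
  assumes length: "\<And>x. x \<in> S \<Longrightarrow> length x = d"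
    and perm_closed: "\<And>\<sigma> x. \<sigma> permutes {..<d} \<Longrightarrow> x \<in> S \<Longrightarrow> permute_list \<sigma> x \<in> S"
    and "i < d"
  shows "(\<Sum>x\<in>S. sum_list (map f x)) = of_nat d * (\<Sum>x\<in>S. f (x ! i))"
proof -
  have "(\<Sum>x\<in>S. sum_list (map f x)) = (\<Sum>x\<in>S. \<Sum>j<d. f (x ! j))"
    by (rule sum.cong) (simp_all add: length sum_list_sum_nth atLeast0LessThan)
  also have "\<dots> = (\<Sum>j<d. \<Sum>x\<in>S. f (x ! j))"
    by (rule sum.swap)
  also have "\<dots> = (\<Sum>j<d. \<Sum>x\<in>S. f (x ! i))"
  proof (rule sum.cong[OF refl])
    fix j assume "j \<in> {..<d}"
    then have "Transposition.transpose j i permutes {..<d}"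
      using \<open>i < d\<close> by (intro permutes_swap_id) auto
    then show "(\<Sum>x\<in>S. f (x ! j)) = (\<Sum>x\<in>S. f (x ! i))"
      using \<open>j \<in> {..<d}\<close> \<open>i < d\<close> by (intro sum_nth_transpose_eq[OF length]) (auto intro: perm_closed)
  qed
  finally show ?thesis
    by simp
qed

(* Permutation symmetry makes all column sums over P equal, and the sign symmetry transfers
   this to the half of P with positive leading entry. *)
lemma kappa_lead_pos:
  fixes P :: "int list set"
  assumes "finite P" "0 < d"
    and length: "\<And>x. x \<in> P \<Longrightarrow> length x = d"
    and perm_closed: "\<And>\<sigma> x. \<sigma> permutes {..<d} \<Longrightarrow> x \<in> P \<Longrightarrow> permute_list \<sigma> x \<in> P"
    and uminus_closed: "\<And>x. x \<in> P \<Longrightarrow> map uminus x \<in> P"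
    and nonzero: "\<And>x. x \<in> P \<Longrightarrow> \<exists>a\<in>set x. a \<noteq> 0"
  shows "int d * kappa d {x\<in>P. lead_pos x} = (\<Sum>x\<in>{x\<in>P. lead_pos x}. l1_norm x)"
proof -
  let ?F = "{x\<in>P. lead_pos x}"
  have column: "int d * (\<Sum>x\<in>?F. \<bar>x ! i\<bar>) = (\<Sum>x\<in>?F. l1_norm x)" if "i < d" for i
  proof -
    have "2 * (int d * (\<Sum>x\<in>?F. \<bar>x ! i\<bar>)) = int d * (\<Sum>x\<in>P. \<bar>x ! i\<bar>)"
      using sum_eq_twice_sum_lead_pos[OF \<open>finite P\<close> uminus_closed nonzero, of "\<lambda>x. \<bar>x ! i\<bar>"]
        length that by simp
    also have "\<dots> = (\<Sum>x\<in>P. l1_norm x)"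
      using sum_sum_list_eq_of_nat_mult_sum_nth[OF length perm_closed that, of abs] by simp
    also have "\<dots> = 2 * (\<Sum>x\<in>?F. l1_norm x)"
      using sum_eq_twice_sum_lead_pos[OF \<open>finite P\<close> uminus_closed nonzero, of "\<lambda>x. l1_norm x"]
      by (simp add: comp_def)
    finally show ?thesis
      by simp
  qed
  have columns_eq: "(\<Sum>x\<in>?F. \<bar>x ! i\<bar>) = (\<Sum>x\<in>?F. \<bar>x ! 0\<bar>)" if "i < d" for i
  proof -
    have "int d * (\<Sum>x\<in>?F. \<bar>x ! i\<bar>) = int d * (\<Sum>x\<in>?F. \<bar>x ! 0\<bar>)"
      unfolding column[OF that] column[OF \<open>0 < d\<close>] ..
    then show ?thesis
      using \<open>0 < d\<close> by simp
  qed
  have "(\<lambda>i. \<Sum>x\<in>?F. \<bar>x ! i\<bar>) ` {..<d} = (\<lambda>_. \<Sum>x\<in>?F. \<bar>x ! 0\<bar>) ` {..<d}"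
    by (rule image_cong[OF refl], rule columns_eq) simp
  also have "\<dots> = {\<Sum>x\<in>?F. \<bar>x ! 0\<bar>}"
    using \<open>0 < d\<close> by (intro image_constant) simp
  finally show ?thesis
    using column[OF \<open>0 < d\<close>] by (simp add: kappa_def)
qed

section \<open>Primitive points of the l1-ball\<close>

abbreviation prim_ball :: "nat \<Rightarrow> nat \<Rightarrow> int list set" where
  "prim_ball d p \<equiv> l1ball d p \<inter> prim_pts d"

lemma abs_le_l1_norm:
  fixes a :: "'a::ordered_ab_group_add_abs"
  shows "a \<in> set x \<Longrightarrow> \<bar>a\<bar> \<le> l1_norm x"
  by (rule member_le_sum_list) auto

lemma nnz_le_l1_norm: "int (nnz x) \<le> l1_norm x"
  by (induction x) auto

lemma l1_norm_eq_nnz_iff: "l1_norm x = int (nnz x) \<longleftrightarrow> set x \<subseteq> {-1, 0, 1}"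
proof (induction x)
  case (Cons a x)
  have "int (nnz x) \<le> l1_norm x"
    by (rule nnz_le_l1_norm)
  then show ?case
    using Cons.IH by auto
qed simp

lemma finite_l1ball: "finite (l1ball d p)"
proof (rule finite_subset[OF _ finite_lists_length_eq[of "{-int p..int p}" d]])
  show "l1ball d p \<subseteq> {x. set x \<subseteq> {-int p..int p} \<and> length x = d}"
    using abs_le_l1_norm by (fastforce simp: l1ball_def abs_le_iff)
qed simp

lemma permute_list_in_l1ball:
  assumes "\<sigma> permutes {..<d}" "x \<in> l1ball d p"
  shows "permute_list \<sigma> x \<in> l1ball d p"
proof -
  have "l1_norm (permute_list \<sigma> x) = l1_norm x"
    using assms by (auto simp: l1ball_def permute_list_map[symmetric] sum_mset_sum_list[symmetric])
  then show ?thesis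
    using assms(2) by (simp add: l1ball_def)
qed

lemma primitive_nonzero:
  assumes "primitive x"
  shows "\<exists>a\<in>set x. a \<noteq> 0"
proof (rule ccontr)
  assume "\<not> (\<exists>a\<in>set x. a \<noteq> 0)"
  then have "Gcd (set x) = 0"
    by auto
  with assms show False
    by (simp add: primitive_def)
qed

lemma primitive_uminus: "primitive (map uminus x) \<longleftrightarrow> primitive x"
  by (simp add: primitive_def)

lemma primitive_permute_list: "\<sigma> permutes {..<length x} \<Longrightarrow> primitive (permute_list \<sigma> x) \<longleftrightarrow> primitive x"
  by (simp add: primitive_def)

lemma primitive_if_unit_entry: "a \<in> set x \<Longrightarrow> is_unit a \<Longrightarrow> primitive x"
  unfolding primitive_def by (metis Gcd_dvd dvd_unit_imp_unit normalize_Gcd is_unit_normalize)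

lemma prim_ball_eq: "prim_ball d p = {x \<in> {y \<in> l1ball d p. primitive y}. lead_pos x}"
  by (auto simp: l1ball_def prim_pts_def lead_pos_def)

lemma kappa_prim_ball:
  assumes "0 < d"
  shows "int d * kappa d (prim_ball d p) = (\<Sum>x\<in>prim_ball d p. l1_norm x)"
  unfolding prim_ball_eq
proof (rule kappa_lead_pos)
  show "finite {y \<in> l1ball d p. primitive y}"
    using finite_l1ball by simp
  show "permute_list \<sigma> x \<in> {y \<in> l1ball d p. primitive y}"
    if "\<sigma> permutes {..<d}" "x \<in> {y \<in> l1ball d p. primitive y}" for \<sigma> x
  proof -
    have "length x = d"
      using that by (simp add: l1ball_def)
    then show ?thesis
      using that by (simp add: permute_list_in_l1ball primitive_permute_list)
  qed
qed (use assms in \<open>auto simp: l1ball_def comp_def primitive_uminus primitive_nonzero\<close>)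

abbreviation sign_vectors :: "nat \<Rightarrow> nat \<Rightarrow> int list set" where
  "sign_vectors d q \<equiv> sparse_lists {-1, 0, 1} d q"

lemma sign_vectors_subset_prim_ball:
  assumes "1 \<le> p"
  shows "{x \<in> sign_vectors d p. lead_pos x} \<subseteq> prim_ball d p"
proof
  fix x assume x: "x \<in> {x \<in> sign_vectors d p. lead_pos x}"
  then have signs: "set x \<subseteq> {-1, 0, 1 :: int}" and "nnz x = p"
    by (auto simp: sparse_lists_def)
  then obtain a where "a \<in> set x" "a \<noteq> 0"
    using assms nnz_eq_0_iff[of x] by auto
  then have "primitive x"
    using signs by (intro primitive_if_unit_entry[of a]) auto
  moreover have "l1_norm x = int p"
    using signs l1_norm_eq_nnz_iff[of x] \<open>nnz x = p\<close> by simp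
  ultimately show "x \<in> prim_ball d p"
    using x by (simp add: sparse_lists_def l1ball_def prim_pts_def lead_pos_def)
qed

lemma prim_ball_subset_sparse_lists:
  "prim_ball d p \<subseteq>
     {x \<in> sign_vectors d p. lead_pos x} \<union> (\<Union>q<p. sparse_lists {-int p..int p} d q)"
proof
  fix x assume x: "x \<in> prim_ball d p"
  then have norm: "l1_norm x \<le> int p"
    by (simp add: l1ball_def)
  show "x \<in> {x \<in> sign_vectors d p. lead_pos x} \<union> (\<Union>q<p. sparse_lists {-int p..int p} d q)"
  proof (cases "nnz x < p")
    case True
    have "set x \<subseteq> {-int p..int p}"
      using norm abs_le_l1_norm[of _ x] by (force simp: abs_le_iff)
    then show ?thesis
      using x True by (auto simp: sparse_lists_def l1ball_def)
  next
    case False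
    then have "l1_norm x = int (nnz x)" "nnz x = p"
      using norm nnz_le_l1_norm[of x] by linarith+
    moreover from this have "set x \<subseteq> {-1, 0, 1}"
      using l1_norm_eq_nnz_iff by blast
    ultimately show ?thesis
      using x by (simp add: sparse_lists_def l1ball_def prim_pts_def lead_pos_def)
  qed
qed

lemma card_lead_pos_sign_vectors:
  assumes "1 \<le> p"
  shows "card {x \<in> sign_vectors d p. lead_pos x} = 2 ^ (p - 1) * (d choose p)"
proof -
  have "card (sign_vectors d p) = 2 * card {x \<in> sign_vectors d p. lead_pos x}"
    unfolding card_eq_sum
  proof (rule sum_eq_twice_sum_lead_pos)
    show "map uminus x \<in> sign_vectors d p" if "x \<in> sign_vectors d p" for x :: "int list"
      using that by (rule map_uminus_in_sparse_lists[rotated]) auto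
    show "\<exists>a\<in>set x. a \<noteq> 0" if "x \<in> sign_vectors d p" for x :: "int list"
      using that assms nnz_eq_0_iff[of x] by (auto simp: sparse_lists_def)
  qed (simp_all add: finite_sparse_lists)
  moreover have "card (sign_vectors d p) = (d choose p) * 2 ^ p"
    by (simp add: card_sparse_lists numeral_2_eq_2)
  moreover have "(2::nat) ^ p = 2 * 2 ^ (p - 1)"
    using assms by (simp add: power_eq_if)
  ultimately show ?thesis
    by (simp add: mult.commute)
qed

lemma card_prim_ball_bounds:
  assumes "1 \<le> p"
  shows "2 ^ (p - 1) * (d choose p) \<le> card (prim_ball d p)"
    and "card (prim_ball d p) \<le> 2 ^ (p - 1) * (d choose p) + (\<Sum>q<p. (d choose q) * (2 * p) ^ q)"
proof -
  let ?S = "{x \<in> sign_vectors d p. lead_pos x}"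
  have "finite (prim_ball d p)"
    by (simp add: finite_l1ball)
  then show "2 ^ (p - 1) * (d choose p) \<le> card (prim_ball d p)"
    using card_mono[OF _ sign_vectors_subset_prim_ball[OF assms]]
    by (simp add: card_lead_pos_sign_vectors[OF assms])
  have "card (prim_ball d p) \<le> card (?S \<union> (\<Union>q<p. sparse_lists {-int p..int p} d q))"
    by (rule card_mono[OF _ prim_ball_subset_sparse_lists]) (simp add: finite_sparse_lists)
  also have "\<dots> \<le> card ?S + card (\<Union>q<p. sparse_lists {-int p..int p} d q)"
    by (rule card_Un_le)
  also have "card (\<Union>q<p. sparse_lists {-int p..int p} d q) \<le> (\<Sum>q<p. card (sparse_lists {-int p..int p} d q))"
    by (rule card_UN_le) simp
  also have "(\<Sum>q<p. card (sparse_lists {-int p..int p} d q)) = (\<Sum>q<p. (d choose q) * (2 * p) ^ q)"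
  proof -
    have "card {-int p..int p} - 1 = 2 * p"
      by simp
    then show ?thesis
      by (simp add: card_sparse_lists)
  qed
  finally show "card (prim_ball d p) \<le> 2 ^ (p - 1) * (d choose p) + (\<Sum>q<p. (d choose q) * (2 * p) ^ q)"
    by (simp add: card_lead_pos_sign_vectors[OF assms])
qed

section \<open>Asymptotics\<close>

lemma binomial_over_power_tendsto: "(\<lambda>n. real (n choose k) / real n ^ k) \<longlonglongrightarrow> 1 / fact k"
proof (rule LIMSEQ_offset[where k = k])
  have "(\<lambda>n. real n / real (n + k)) \<longlonglongrightarrow> 1"
  proof (rule Lim_transform_eventually)
    have "(\<lambda>n. inverse (1 + real k * inverse (real n))) \<longlonglongrightarrow> inverse (1 + real k * 0)"
      by (intro tendsto_intros lim_inverse_n) simp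
    then show "(\<lambda>n. inverse (1 + real k * inverse (real n))) \<longlonglongrightarrow> 1"
      by simp
    show "\<forall>\<^sub>F n in sequentially. inverse (1 + real k * inverse (real n)) = real n / real (n + k)"
      using eventually_gt_at_top[of 0] by eventually_elim (simp add: field_simps)
  qed
  then have "(\<lambda>n. real ((k + n) choose n) / real (n ^ k) * (real n / real (n + k)) ^ k)
      \<longlonglongrightarrow> 1 / fact k"
    using tendsto_mult[OF fact_binomial_limit tendsto_power] by fastforce
  moreover have "\<forall>\<^sub>F n in sequentially. real ((k + n) choose n) / real (n ^ k) * (real n / real (n + k)) ^ k
      = real ((n + k) choose k) / real (n + k) ^ k"
    using eventually_gt_at_top[of 0]
  proof eventually_elim
    case (elim n)
    have "(n + k) choose k = (k + n) choose n"
      using binomial_symmetric[of k "n + k"] by (simp add: add.commute)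
    then show ?case
      using elim by (simp add: power_divide)
  qed
  ultimately show "(\<lambda>n. real ((n + k) choose k) / real (n + k) ^ k) \<longlonglongrightarrow> 1 / fact k"
    by (rule Lim_transform_eventually)
qed

lemma binomial_over_higher_power_tendsto_0:
  assumes "q < k"
  shows "(\<lambda>n. real (n choose q) / real n ^ k) \<longlonglongrightarrow> 0"
proof (rule Lim_transform_eventually)
  have "(\<lambda>n. real (n choose q) / real n ^ q * inverse (real n) ^ (k - q)) \<longlonglongrightarrow> 1 / fact q * 0 ^ (k - q)"
    by (intro tendsto_intros binomial_over_power_tendsto lim_inverse_n)
  then show "(\<lambda>n. real (n choose q) / real n ^ q * inverse (real n) ^ (k - q)) \<longlonglongrightarrow> 0"
    using assms by (simp add: power_0_left)
  show "\<forall>\<^sub>F n in sequentially. real (n choose q) / real n ^ q * inverse (real n) ^ (k - q)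
      = real (n choose q) / real n ^ k"
    using eventually_gt_at_top[of 0]
  proof eventually_elim
    case (elim n)
    have "real n ^ k = real n ^ q * real n ^ (k - q)"
      using assms by (simp flip: power_add)
    then show ?case
      using elim by (simp add: field_simps)
  qed
qed

lemma tendsto_card_prim_ball:
  assumes "1 \<le> p"
  shows "(\<lambda>d. real (card (prim_ball d p)) / real d ^ p) \<longlonglongrightarrow> 2 ^ (p - 1) / fact p"
proof -
  let ?main = "\<lambda>d. 2 ^ (p - 1) * (real (d choose p) / real d ^ p)"
  let ?error = "\<lambda>d. \<Sum>q<p. (2 * real p) ^ q * (real (d choose q) / real d ^ p)"
  have main: "?main \<longlonglongrightarrow> 2 ^ (p - 1) / fact p"
    using tendsto_mult_left[OF binomial_over_power_tendsto, of "2 ^ (p - 1)" p] by simp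
  have error: "?error \<longlonglongrightarrow> 0"
    by (intro tendsto_null_sum tendsto_mult_right_zero binomial_over_higher_power_tendsto_0) simp
  show ?thesis
  proof (rule tendsto_sandwich[OF _ _ main])
    have "?main d \<le> real (card (prim_ball d p)) / real d ^ p" for d
    proof -
      have "2 ^ (p - 1) * real (d choose p) \<le> real (card (prim_ball d p))"
        using of_nat_mono[OF card_prim_ball_bounds(1)[OF assms, of d]] by simp
      then show ?thesis
        by (simp add: divide_right_mono)
    qed
    then show "\<forall>\<^sub>F d in sequentially. ?main d \<le> real (card (prim_ball d p)) / real d ^ p"
      by simp
    have "real (card (prim_ball d p)) / real d ^ p \<le> ?main d + ?error d" for d
    proof -
      have "real (card (prim_ball d p))
          \<le> 2 ^ (p - 1) * real (d choose p) + (\<Sum>q<p. real (d choose q) * (2 * real p) ^ q)"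
        using of_nat_mono[OF card_prim_ball_bounds(2)[OF assms, of d]] by simp
      then have "real (card (prim_ball d p)) / real d ^ p
          \<le> (2 ^ (p - 1) * real (d choose p) + (\<Sum>q<p. real (d choose q) * (2 * real p) ^ q)) / real d ^ p"
        by (rule divide_right_mono) simp
      also have "\<dots> = ?main d + ?error d"
        by (simp add: add_divide_distrib sum_divide_distrib mult.commute)
      finally show ?thesis .
    qed
    then show "\<forall>\<^sub>F d in sequentially. real (card (prim_ball d p)) / real d ^ p \<le> ?main d + ?error d"
      by simp
    show "(\<lambda>d. ?main d + ?error d) \<longlonglongrightarrow> 2 ^ (p - 1) / fact p"
      using tendsto_add[OF main error] by simp
  qed
qed

lemma sum_l1_norm_prim_ball_bounds:
  assumes "1 \<le> p"
  shows "int p * (2 ^ (p - 1) * int (d choose p)) \<le> (\<Sum>x\<in>prim_ball d p. l1_norm x)"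
    and "(\<Sum>x\<in>prim_ball d p. l1_norm x) \<le> int p * int (card (prim_ball d p))"
proof -
  let ?S = "{x \<in> sign_vectors d p. lead_pos x}"
  have "(\<Sum>x\<in>?S. l1_norm x) = (\<Sum>x\<in>?S. int p)"
  proof (rule sum.cong)
    fix x assume "x \<in> ?S"
    then show "l1_norm x = int p"
      using l1_norm_eq_nnz_iff[of x] by (auto simp: sparse_lists_def)
  qed simp
  also have "\<dots> = int p * (2 ^ (p - 1) * int (d choose p))"
    using card_lead_pos_sign_vectors[OF assms, of d] by simp
  finally have "int p * (2 ^ (p - 1) * int (d choose p)) = (\<Sum>x\<in>?S. l1_norm x)" ..
  also have "\<dots> \<le> (\<Sum>x\<in>prim_ball d p. l1_norm x)"
    by (rule sum_mono2[OF _ sign_vectors_subset_prim_ball[OF assms]])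
      (auto simp: finite_l1ball intro!: sum_list_nonneg)
  finally show "int p * (2 ^ (p - 1) * int (d choose p)) \<le> (\<Sum>x\<in>prim_ball d p. l1_norm x)" .
  have "(\<Sum>x\<in>prim_ball d p. l1_norm x) \<le> of_nat (card (prim_ball d p)) * int p"
    by (rule sum_bounded_above) (simp add: l1ball_def)
  then show "(\<Sum>x\<in>prim_ball d p. l1_norm x) \<le> int p * int (card (prim_ball d p))"
    by (simp add: mult.commute)
qed

lemma tendsto_sum_l1_norm_prim_ball:
  assumes "1 \<le> p"
  shows "(\<lambda>d. real_of_int (\<Sum>x\<in>prim_ball d p. l1_norm x) / real d ^ p)
           \<longlonglongrightarrow> 2 ^ (p - 1) / fact (p - 1)"
proof -
  have limit: "real p * (2 ^ (p - 1) / fact p) = 2 ^ (p - 1) / fact (p - 1)"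
    using assms by (simp add: fact_reduce[of p])
  let ?lower = "\<lambda>d. real p * (2 ^ (p - 1) * (real (d choose p) / real d ^ p))"
  let ?upper = "\<lambda>d. real p * (real (card (prim_ball d p)) / real d ^ p)"
  show ?thesis
  proof (rule tendsto_sandwich)
    show "?lower \<longlonglongrightarrow> 2 ^ (p - 1) / fact (p - 1)"
      using tendsto_mult_left[OF binomial_over_power_tendsto, of "real p * 2 ^ (p - 1)" p] limit
      by (simp add: mult.assoc)
    show "?upper \<longlonglongrightarrow> 2 ^ (p - 1) / fact (p - 1)"
      using tendsto_mult_left[OF tendsto_card_prim_ball[OF assms], of "real p"] limit by simp
    show "\<forall>\<^sub>F d in sequentially.
        ?lower d \<le> real_of_int (\<Sum>x\<in>prim_ball d p. l1_norm x) / real d ^ p"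
    proof (intro always_eventually allI)
      fix d
      have "real_of_int (int p * (2 ^ (p - 1) * int (d choose p)))
          \<le> real_of_int (\<Sum>x\<in>prim_ball d p. l1_norm x)"
        unfolding of_int_le_iff by (rule sum_l1_norm_prim_ball_bounds(1)[OF assms])
      then have "real p * (2 ^ (p - 1) * real (d choose p))
          \<le> real_of_int (\<Sum>x\<in>prim_ball d p. l1_norm x)"
        by simp
      then show "?lower d \<le> real_of_int (\<Sum>x\<in>prim_ball d p. l1_norm x) / real d ^ p"
        by (simp add: divide_right_mono)
    qed
    show "\<forall>\<^sub>F d in sequentially.
        real_of_int (\<Sum>x\<in>prim_ball d p. l1_norm x) / real d ^ p \<le> ?upper d"
    proof (intro always_eventually allI)
      fix d
      have "real_of_int (\<Sum>x\<in>prim_ball d p. l1_norm x)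
          \<le> real_of_int (int p * int (card (prim_ball d p)))"
        unfolding of_int_le_iff by (rule sum_l1_norm_prim_ball_bounds(2)[OF assms])
      then show "real_of_int (\<Sum>x\<in>prim_ball d p. l1_norm x) / real d ^ p \<le> ?upper d"
        by (simp add: divide_right_mono)
    qed
  qed
qed

lemma kappa_prim_ball_over_power:
  assumes "1 \<le> p" "0 < d"
  shows "real_of_int (kappa d (prim_ball d p)) / real d ^ (p - 1)
    = real_of_int (\<Sum>x\<in>prim_ball d p. l1_norm x) / real d ^ p"
proof -
  have "real d ^ p = real d * real d ^ (p - 1)"
    using assms(1) by (simp flip: power_Suc)
  then show ?thesis
    using assms(2) kappa_prim_ball[OF assms(2), of p, THEN arg_cong[where f = real_of_int], symmetric]
    by simp
qed

theorem lemma7p3: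
  fixes p :: nat
  assumes "p \<ge> 1"
  shows "((\<lambda>d. real (card (l1ball d p \<inter> prim_pts d)) / real d ^ p)
           \<longlonglongrightarrow> 2 ^ (p - 1) / fact p)
         \<and> ((\<lambda>d. real_of_int (kappa d (l1ball d p \<inter> prim_pts d)) / real d ^ (p - 1))
           \<longlonglongrightarrow> 2 ^ (p - 1) / fact (p - 1))"
proof
  show "(\<lambda>d. real (card (prim_ball d p)) / real d ^ p) \<longlonglongrightarrow> 2 ^ (p - 1) / fact p"
    using tendsto_card_prim_ball[OF assms] .
  have "\<forall>\<^sub>F d in sequentially.
      real_of_int (\<Sum>x\<in>prim_ball d p. l1_norm x) / real d ^ p
      = real_of_int (kappa d (prim_ball d p)) / real d ^ (p - 1)"
    using eventually_gt_at_top[of 0]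
    by eventually_elim (rule kappa_prim_ball_over_power[OF assms, symmetric])
  with tendsto_sum_l1_norm_prim_ball[OF assms]
  show "(\<lambda>d. real_of_int (kappa d (prim_ball d p)) / real d ^ (p - 1))
      \<longlonglongrightarrow> 2 ^ (p - 1) / fact (p - 1)"
    by (rule Lim_transform_eventually)
qed

end
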